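(* Under the hypotheses and notation of the bridging theorem (two disjoint finite connected graphs $G_1=(V_1,E_1)$, $G_2=(V_2,E_2)$ with $n_i=|V_i|\ge2$, invertible distance matrices, total curvatures $k_i$, $Z=(2+k_1/n_1)(2+k_2/n_2)\neq4$, $K_{G_1}(u)\ne0$, $K_{G_2}(v)\neq0$, and $G$ obtained by adding the edge $\{u,v\}$, $u\in V_1$, $v\in V_2$), with $V=V_1\cup V_2$ and $\alpha=\frac{2(n_1+n_2)k_2}{n_1n_2(Z-4)}$, $\beta=\frac{2(n_1+n_2)k_1}{n_1n_2(Z-4)}$, we have $$K_G(V)=\frac{\alpha}{2}K_{G_1}(V_1)+\frac{\beta}{2}K_{G_2}(V_2)=\alpha K_{G_1}(V_1)=\beta K_{G_2}(V_2).$$ In particular, the total Steinerberger curvature of $G$ depends only on $n_1,n_2,k_1,k_2$ and not on the choice of the vertices $u\in V_1$, $v\in V_2$ joined by the bridge.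
   Context: All graphs are finite, simple, connected and undirected, with the combinatorial shortest-path distance $d$. For $G=(V,E)$ with $V=\{v_1,\dots,v_n\}$, let $D=(d(v_i,v_j))_{i,j=1}^n$ be its distance matrix and $\mathbf{1}_n\in\mathbb{R}^n$ the all-ones column vector. The Steinerberger curvature $K\in\mathbb{R}^n$ (written $K_i$ or $K(v_i)$) is defined as follows: if $DK=n\mathbf{1}_n$ has a unique solution, $K$ is that solution; if it has several solutions, $K$ is a solution for which $\min_i K_i$ is maximal; if it has no solution, $K=nD^\dagger\mathbf{1}_n$ with $D^\dagger$ the Moore–Penrose pseudoinverse. The total curvature of a vertex subset $W$ is $K(W)=\sum_{w\in W}K(w)$; $K_G$, $K_{G_1}$, $K_{G_2}$ denote the Steinerberger curvatures of $G$, $G_1$, $G_2$. *)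

theory Defs
  imports Complex_Main
begin

text \<open>Matrices/vectors indexed by V are functions on the vertex type,
  only their values on V matter.\<close>

definition simple_graph :: "'a set \<Rightarrow> ('a \<Rightarrow> 'a \<Rightarrow> bool) \<Rightarrow> bool" where
  "simple_graph V E \<longleftrightarrow> finite V \<and> V \<noteq> {} \<and>
     (\<forall>x y. E x y \<longrightarrow> x \<in> V \<and> y \<in> V) \<and>
     (\<forall>x y. E x y \<longrightarrow> E y x) \<and> (\<forall>x. \<not> E x x)"

definition is_walk :: "'a set \<Rightarrow> ('a \<Rightarrow> 'a \<Rightarrow> bool) \<Rightarrow> 'a list \<Rightarrow> bool" where
  "is_walk V E xs \<longleftrightarrow> xs \<noteq> [] \<and> set xs \<subseteq> V \<and>
     (\<forall>i. Suc i < length xs \<longrightarrow> E (xs ! i) (xs ! Suc i))"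

definition connected_graph :: "'a set \<Rightarrow> ('a \<Rightarrow> 'a \<Rightarrow> bool) \<Rightarrow> bool" where
  "connected_graph V E \<longleftrightarrow> simple_graph V E \<and>
     (\<forall>x\<in>V. \<forall>y\<in>V. \<exists>xs. is_walk V E xs \<and> hd xs = x \<and> last xs = y)"

definition graph_dist :: "'a set \<Rightarrow> ('a \<Rightarrow> 'a \<Rightarrow> bool) \<Rightarrow> 'a \<Rightarrow> 'a \<Rightarrow> nat" where
  "graph_dist V E x y = (LEAST k. \<exists>xs. is_walk V E xs \<and> hd xs = x \<and> last xs = y \<and> length xs = Suc k)"

definition dist_matrix :: "'a set \<Rightarrow> ('a \<Rightarrow> 'a \<Rightarrow> bool) \<Rightarrow> 'a \<Rightarrow> 'a \<Rightarrow> real" where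
  "dist_matrix V E i j = real (graph_dist V E i j)"

definition mmul :: "'a set \<Rightarrow> ('a \<Rightarrow> 'a \<Rightarrow> real) \<Rightarrow> ('a \<Rightarrow> 'a \<Rightarrow> real) \<Rightarrow> 'a \<Rightarrow> 'a \<Rightarrow> real" where
  "mmul V A B i j = (\<Sum>k\<in>V. A i k * B k j)"

definition mvec :: "'a set \<Rightarrow> ('a \<Rightarrow> 'a \<Rightarrow> real) \<Rightarrow> ('a \<Rightarrow> real) \<Rightarrow> 'a \<Rightarrow> real" where
  "mvec V A x i = (\<Sum>j\<in>V. A i j * x j)"

definition invertible_on :: "'a set \<Rightarrow> ('a \<Rightarrow> 'a \<Rightarrow> real) \<Rightarrow> bool" where
  "invertible_on V A \<longleftrightarrow> (\<exists>B. \<forall>i\<in>V. \<forall>j\<in>V.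
      mmul V A B i j = (if i = j then 1 else 0) \<and> mmul V B A i j = (if i = j then 1 else 0))"

definition pinv_on :: "'a set \<Rightarrow> ('a \<Rightarrow> 'a \<Rightarrow> real) \<Rightarrow> 'a \<Rightarrow> 'a \<Rightarrow> real" where
  "pinv_on V A = (THE P. (\<forall>i j. (i \<notin> V \<or> j \<notin> V) \<longrightarrow> P i j = 0) \<and>
      (\<forall>i\<in>V. \<forall>j\<in>V.
         mmul V (mmul V A P) A i j = A i j \<and>
         mmul V (mmul V P A) P i j = P i j \<and>
         mmul V A P i j = mmul V A P j i \<and>
         mmul V P A i j = mmul V P A j i))"

definition curv_solutions :: "'a set \<Rightarrow> ('a \<Rightarrow> 'a \<Rightarrow> bool) \<Rightarrow> ('a \<Rightarrow> real) set" where
  "curv_solutions V E = {K. (\<forall>i. i \<notin> V \<longrightarrow> K i = 0) \<and>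
      (\<forall>i\<in>V. mvec V (dist_matrix V E) K i = real (card V))}"

definition steinerberger_curv :: "'a set \<Rightarrow> ('a \<Rightarrow> 'a \<Rightarrow> bool) \<Rightarrow> 'a \<Rightarrow> real" where
  "steinerberger_curv V E =
     (let S = curv_solutions V E in
      if (\<exists>!K. K \<in> S) then (THE K. K \<in> S)
      else if S \<noteq> {} then
        (SOME K. K \<in> S \<and> (\<forall>K'\<in>S. Min (K' ` V) \<le> Min (K ` V)))
      else (\<lambda>i. if i \<in> V then real (card V) *
                    (\<Sum>j\<in>V. pinv_on V (dist_matrix V E) i j) else 0))"

end

theory Submission
  imports Defs
begin

(* Across the bridge the distance splits as d(i,j) = d1(i,u) + 1 + d2(v,j), so the distance
   matrix of G is built from D1, D2 and rank-one corrections. Writing D x = c 1 blockwise and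
   using Di Ki = ni 1 together with the invertibility of Di, every solution is a K1 on V1 and
   b K2 on V2, lowered by one and the same amount s at the two ends u, v of the bridge, where
   a k1 = 2s, b k2 = 2s and a n1 + b n2 + s = c. This linear system in (a, b, s) has
   determinant n1 n2 (Z - 4) <> 0, so the curvature of G is unique, with a = alpha, b = beta,
   and its total is a k1 + b k2 - 2s = alpha k1 = beta k2. *)

lemma is_walk_singleton [simp]: "is_walk V E [x] \<longleftrightarrow> x \<in> V"
  by (simp add: is_walk_def)

lemma is_walk_Cons_Cons:
  "is_walk V E (x # y # xs) \<longleftrightarrow> x \<in> V \<and> E x y \<and> is_walk V E (y # xs)"
  unfolding is_walk_def by (auto simp: less_Suc_eq_0_disj)

lemma is_walk_append:
  assumes "is_walk V E xs" "is_walk V E ys" "E (last xs) (hd ys)"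
  shows "is_walk V E (xs @ ys)"
  using assms
proof (induction xs rule: induct_list012)
  case (2 x)
  then show ?case by (cases ys) (auto simp: is_walk_Cons_Cons)
next
  case (3 x y zs)
  then show ?case by (simp add: is_walk_Cons_Cons)
qed (simp add: is_walk_def)

lemma is_walk_mono:
  "is_walk V E xs \<Longrightarrow> V \<subseteq> V' \<Longrightarrow> (\<And>x y. E x y \<Longrightarrow> E' x y) \<Longrightarrow> is_walk V' E' xs"
  unfolding is_walk_def by auto

lemma is_walk_increase_le:
  fixes f :: "'a \<Rightarrow> nat"
  assumes step: "\<And>p q. p \<in> V \<Longrightarrow> q \<in> V \<Longrightarrow> E p q \<Longrightarrow> f q \<le> f p + 1"
    and "is_walk V E xs"
  shows "f (last xs) \<le> f (hd xs) + (length xs - 1)"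
  using assms(2)
proof (induction xs rule: induct_list012)
  case (3 x y xs)
  then have "f y \<le> f x + 1"
    using step by (auto simp: is_walk_Cons_Cons is_walk_def)
  with 3 show ?case by (simp add: is_walk_Cons_Cons)
qed (auto simp: is_walk_def)

lemma graph_dist_le_walk:
  "is_walk V E xs \<Longrightarrow> graph_dist V E (hd xs) (last xs) \<le> length xs - 1"
  unfolding graph_dist_def by (rule Least_le) (auto simp: is_walk_def)

lemma shortest_walk_exists:
  assumes "connected_graph V E" "x \<in> V" "y \<in> V"
  obtains xs where "is_walk V E xs" "hd xs = x" "last xs = y"
    "length xs = Suc (graph_dist V E x y)"
proof -
  obtain xs where "is_walk V E xs" "hd xs = x" "last xs = y"
    using assms unfolding connected_graph_def by blast
  then have "\<exists>k xs. is_walk V E xs \<and> hd xs = x \<and> last xs = y \<and> length xs = Suc k"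
    by (intro exI[of _ "length xs - 1"] exI[of _ xs]) (auto simp: is_walk_def)
  from LeastI_ex[OF this] show ?thesis
    using that unfolding graph_dist_def by blast
qed

lemma graph_dist_self: "x \<in> V \<Longrightarrow> graph_dist V E x x = 0"
  using graph_dist_le_walk[of V E "[x]"] by simp

lemma graph_dist_edge_le:
  assumes G: "connected_graph V E" and "x \<in> V" "E p q"
  shows "graph_dist V E x q \<le> graph_dist V E x p + 1"
proof -
  have "p \<in> V" "q \<in> V"
    using G \<open>E p q\<close> by (auto simp: connected_graph_def simple_graph_def)
  then obtain xs where xs: "is_walk V E xs" "hd xs = x" "last xs = p"
    "length xs = Suc (graph_dist V E x p)"
    using shortest_walk_exists[OF G \<open>x \<in> V\<close>] by blast
  have "is_walk V E (xs @ [q])"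
    using is_walk_append[OF xs(1)] \<open>q \<in> V\<close> \<open>E p q\<close> xs(3) by simp
  from graph_dist_le_walk[OF this] show ?thesis
    using xs by (cases xs) auto
qed

lemma graph_dist_eqI:
  assumes "is_walk V E xs" "hd xs = x" "last xs = y" "length xs = Suc m"
    and "\<And>ys. is_walk V E ys \<Longrightarrow> hd ys = x \<Longrightarrow> last ys = y \<Longrightarrow> m \<le> length ys - 1"
  shows "graph_dist V E x y = m"
  unfolding graph_dist_def
proof (rule Least_equality)
  fix k
  assume "\<exists>xs. is_walk V E xs \<and> hd xs = x \<and> last xs = y \<and> length xs = Suc k"
  then show "m \<le> k" using assms(5) by fastforce
qed (use assms in blast)

definition bridge_edges ::
    "('a \<Rightarrow> 'a \<Rightarrow> bool) \<Rightarrow> ('a \<Rightarrow> 'a \<Rightarrow> bool) \<Rightarrow> 'a \<Rightarrow> 'a \<Rightarrow> 'a \<Rightarrow> 'a \<Rightarrow> bool" where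
  "bridge_edges E1 E2 u v x y \<longleftrightarrow> E1 x y \<or> E2 x y \<or> (x = u \<and> y = v) \<or> (x = v \<and> y = u)"

lemma bridge_edges_commute: "bridge_edges E2 E1 v u = bridge_edges E1 E2 u v"
  by (auto simp: fun_eq_iff bridge_edges_def)

lemma graph_dist_bridge_left:
  assumes G1: "connected_graph V1 E1" and G2: "connected_graph V2 E2"
    and disj: "V1 \<inter> V2 = {}" and u: "u \<in> V1" and v: "v \<in> V2"
    and x: "x \<in> V1" and y: "y \<in> V1 \<union> V2"
  shows "graph_dist (V1 \<union> V2) (bridge_edges E1 E2 u v) x y =
    (if y \<in> V1 then graph_dist V1 E1 x y
     else graph_dist V1 E1 x u + 1 + graph_dist V2 E2 v y)"
    (is "_ = ?f y")
proof -
  let ?V = "V1 \<union> V2" and ?E = "bridge_edges E1 E2 u v"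
  have E1V: "E1 p q \<Longrightarrow> p \<in> V1 \<and> q \<in> V1"
    and E2V: "E2 p q \<Longrightarrow> p \<in> V2 \<and> q \<in> V2" for p q
    using G1 G2 by (auto simp: connected_graph_def simple_graph_def)
  have walk1: "is_walk ?V ?E xs" if "is_walk V1 E1 xs" for xs
    using is_walk_mono[OF that] by (auto simp: bridge_edges_def)
  have walk2: "is_walk ?V ?E xs" if "is_walk V2 E2 xs" for xs
    using is_walk_mono[OF that] by (auto simp: bridge_edges_def)
  have "\<exists>xs. is_walk ?V ?E xs \<and> hd xs = x \<and> last xs = y \<and> length xs = Suc (?f y)"
  proof (cases "y \<in> V1")
    case True
    then show ?thesis
      using shortest_walk_exists[OF G1 x True] walk1 by metis
  next
    case False
    then have "y \<in> V2" using y by blast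
    obtain xs where xs: "is_walk V1 E1 xs" "hd xs = x" "last xs = u"
      "length xs = Suc (graph_dist V1 E1 x u)"
      using shortest_walk_exists[OF G1 x u] .
    obtain ys where ys: "is_walk V2 E2 ys" "hd ys = v" "last ys = y"
      "length ys = Suc (graph_dist V2 E2 v y)"
      using shortest_walk_exists[OF G2 v \<open>y \<in> V2\<close>] .
    have "is_walk ?V ?E (xs @ ys)"
      using is_walk_append[OF walk1[OF xs(1)] walk2[OF ys(1)]] xs(3) ys(2)
      by (simp add: bridge_edges_def)
    then show ?thesis
      using xs ys False by (intro exI[of _ "xs @ ys"]) (auto simp: is_walk_def)
  qed
  then obtain xs where xs: "is_walk ?V ?E xs" "hd xs = x" "last xs = y" "length xs = Suc (?f y)"
    by blast
  have step: "?f q \<le> ?f p + 1" if "?E p q" for p q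
    using that disj u v graph_dist_edge_le[OF G1 x] graph_dist_edge_le[OF G2 v]
      graph_dist_self[OF v] E1V E2V
    unfolding bridge_edges_def by fastforce
  show ?thesis
  proof (rule graph_dist_eqI[OF xs])
    fix ys assume ys: "is_walk ?V ?E ys" "hd ys = x" "last ys = y"
    have "?f (last ys) \<le> ?f (hd ys) + (length ys - 1)"
      using is_walk_increase_le[of ?V ?E ?f ys] step ys(1) by blast
    then show "?f y \<le> length ys - 1"
      unfolding ys(2,3) using graph_dist_self[OF x] x by simp
  qed
qed

lemma graph_dist_bridge:
  assumes G1: "connected_graph V1 E1" and G2: "connected_graph V2 E2"
    and disj: "V1 \<inter> V2 = {}" and u: "u \<in> V1" and v: "v \<in> V2"
    and x: "x \<in> V1 \<union> V2" and y: "y \<in> V1 \<union> V2"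
  shows "graph_dist (V1 \<union> V2) (bridge_edges E1 E2 u v) x y =
    (if x \<in> V1 then
       if y \<in> V1 then graph_dist V1 E1 x y else graph_dist V1 E1 x u + 1 + graph_dist V2 E2 v y
     else
       if y \<in> V1 then graph_dist V2 E2 x v + 1 + graph_dist V1 E1 u y else graph_dist V2 E2 x y)"
proof (cases "x \<in> V1")
  case True
  then show ?thesis using graph_dist_bridge_left[OF G1 G2 disj u v True y] by simp
next
  case False
  with x have "x \<in> V2" by blast
  from graph_dist_bridge_left[OF G2 G1 _ v u this, of y] disj y False
  show ?thesis by (auto simp: Un_commute Int_commute bridge_edges_commute)
qed

lemma mvec_mmul: "mvec V (mmul V B A) x i = mvec V B (mvec V A x) i"
proof -
  have "mvec V (mmul V B A) x i = (\<Sum>j\<in>V. \<Sum>k\<in>V. B i k * A k j * x j)"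
    by (simp add: mvec_def mmul_def sum_distrib_right)
  also have "\<dots> = (\<Sum>k\<in>V. \<Sum>j\<in>V. B i k * A k j * x j)"
    by (rule sum.swap)
  finally show ?thesis
    by (simp add: mvec_def sum_distrib_left mult.assoc)
qed

lemma mvec_identity:
  assumes "finite V" "i \<in> V" "\<forall>j\<in>V. M i j = (if i = j then 1 else 0)"
  shows "mvec V M x i = x i"
proof -
  have "mvec V M x i = (\<Sum>j\<in>V. if i = j then x j else 0)"
    unfolding mvec_def using assms(3) by (intro sum.cong) auto
  then show ?thesis using assms(1,2) by simp
qed

lemma mvec_cong: "(\<And>j. j \<in> V \<Longrightarrow> x j = y j) \<Longrightarrow> mvec V A x i = mvec V A y i"
  unfolding mvec_def by simp

lemma mvec_scale: "mvec V A (\<lambda>j. c * x j) i = c * mvec V A x i"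
  by (simp add: mvec_def sum_distrib_left mult.left_commute)

lemma invertible_on_mvec_eq:
  assumes "finite V" "invertible_on V A" "\<forall>i\<in>V. mvec V A x i = mvec V A y i" "j \<in> V"
  shows "x j = y j"
proof -
  obtain B where B: "\<forall>i\<in>V. \<forall>j\<in>V. mmul V B A i j = (if i = j then 1 else 0)"
    using assms(2) unfolding invertible_on_def by blast
  have "z j = mvec V B (mvec V A z) j" for z
    using mvec_identity[OF assms(1,4), of "mmul V B A" z] B assms(4) by (simp add: mvec_mmul)
  moreover have "mvec V B (mvec V A x) j = mvec V B (mvec V A y) j"
    by (rule mvec_cong) (use assms(3) in simp)
  ultimately show ?thesis by metis
qed

lemma invertible_on_solvable:
  assumes "finite V" "invertible_on V A"
  obtains x where "\<forall>i. i \<notin> V \<longrightarrow> x i = 0" "\<forall>i\<in>V. mvec V A x i = b i"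
proof -
  obtain B where B: "\<forall>i\<in>V. \<forall>j\<in>V. mmul V A B i j = (if i = j then 1 else 0)"
    using assms(2) unfolding invertible_on_def by blast
  define x where "x i = (if i \<in> V then mvec V B b i else 0)" for i
  have "mvec V A x i = b i" if "i \<in> V" for i
  proof -
    have "mvec V A x i = mvec V (mmul V A B) b i"
      unfolding mvec_mmul by (rule mvec_cong) (simp add: x_def)
    also have "\<dots> = b i"
      using mvec_identity[OF assms(1) that] B that by simp
    finally show ?thesis .
  qed
  then show thesis
    by (intro that[of x]) (auto simp: x_def)
qed

lemma steinerberger_curv_eqI:
  assumes "curv_solutions V E = {K}"
  shows "steinerberger_curv V E = K"
proof -
  have "\<exists>!K. K \<in> curv_solutions V E" by (simp add: assms)
  then have "steinerberger_curv V E = (THE K. K \<in> curv_solutions V E)"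
    unfolding steinerberger_curv_def Let_def by (rule if_P)
  then show ?thesis by (simp add: assms)
qed

lemma steinerberger_curv_invertible:
  assumes "finite V" "invertible_on V (dist_matrix V E)" "i \<in> V"
  shows "mvec V (dist_matrix V E) (steinerberger_curv V E) i = card V"
proof -
  obtain K where K: "\<forall>i. i \<notin> V \<longrightarrow> K i = 0" "\<forall>i\<in>V. mvec V (dist_matrix V E) K i = card V"
    by (rule invertible_on_solvable[OF assms(1,2)])
  have "K \<in> curv_solutions V E"
    unfolding curv_solutions_def using K by blast
  moreover have "K' = K" if "K' \<in> curv_solutions V E" for K'
  proof
    fix j
    have K': "\<forall>i. i \<notin> V \<longrightarrow> K' i = 0" "\<forall>i\<in>V. mvec V (dist_matrix V E) K' i = card V"
      using that unfolding curv_solutions_def by blast+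
    show "K' j = K j"
    proof (cases "j \<in> V")
      case True
      then show ?thesis
        using invertible_on_mvec_eq[OF assms(1,2) _ True] K'(2) K(2) by simp
    qed (use K'(1) K(1) in simp)
  qed
  ultimately have "curv_solutions V E = {K}" by blast
  then show ?thesis
    using K(2) assms(3) by (simp add: steinerberger_curv_eqI)
qed

lemma invertible_on_constant_rhs:
  assumes "finite V" "invertible_on V A" "\<forall>i\<in>V. mvec V A K i = n" "n \<noteq> 0"
    and "\<forall>i\<in>V. mvec V A y i = t" "j \<in> V"
  shows "y j = t / n * K j"
proof (rule invertible_on_mvec_eq[OF assms(1,2) _ assms(6)], intro ballI)
  fix i assume "i \<in> V"
  then show "mvec V A y i = mvec V A (\<lambda>j. t / n * K j) i"
    using assms(3-5) by (simp only: mvec_scale) simp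
qed

lemma shifted_vector:
  assumes "finite V" "p \<in> V" "\<forall>j\<in>V. x j = a * K j - (if j = p then s else 0)"
  shows mvec_shifted: "mvec V A x i = a * mvec V A K i - A i p * s"
    and sum_shifted: "sum x V = a * sum K V - s"
proof -
  have "mvec V A x i = (\<Sum>j\<in>V. a * (A i j * K j) - (if j = p then A i p * s else 0))"
    unfolding mvec_def by (intro sum.cong refl) (simp add: assms(3) right_diff_distrib)
  then show "mvec V A x i = a * mvec V A K i - A i p * s"
    using assms(1,2) by (simp add: sum_subtractf mvec_def sum_distrib_left)
  have "sum x V = (\<Sum>j\<in>V. a * K j - (if j = p then s else 0))"
    by (intro sum.cong refl) (simp add: assms(3))
  then show "sum x V = a * sum K V - s"
    using assms(1,2) by (simp add: sum_subtractf sum_distrib_left)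
qed

lemma invertible_on_shifted_solution:
  assumes "finite V" "invertible_on V A" "\<forall>i\<in>V. mvec V A K i = n" "n \<noteq> 0" "p \<in> V"
    and "\<forall>i\<in>V. mvec V A x i + A i p * s = t"
  shows "\<forall>j\<in>V. x j = t / n * K j - (if j = p then s else 0)"
proof
  fix j assume "j \<in> V"
  let ?y = "\<lambda>j. x j + (if j = p then s else 0)"
  have "\<forall>i\<in>V. mvec V A ?y i = t"
    using assms(6) mvec_shifted[OF assms(1,5), of x 1 ?y s A] by simp
  from invertible_on_constant_rhs[OF assms(1-4) this \<open>j \<in> V\<close>]
  show "x j = t / n * K j - (if j = p then s else 0)" by simp
qed

lemma sum_Un_bridge_row:
  fixes M P Q x :: "'a \<Rightarrow> real"
  assumes "finite A" "finite B" "A \<inter> B = {}"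
    and "\<forall>j\<in>A. M j = P j" "\<forall>j\<in>B. M j = r + Q j"
  shows "(\<Sum>j\<in>A \<union> B. M j * x j) = (\<Sum>j\<in>A. P j * x j) + r * sum x B + (\<Sum>j\<in>B. Q j * x j)"
proof -
  have "(\<Sum>j\<in>A \<union> B. M j * x j) = (\<Sum>j\<in>A. M j * x j) + (\<Sum>j\<in>B. M j * x j)"
    using assms(1-3) by (rule sum.union_disjoint)
  also have "(\<Sum>j\<in>A. M j * x j) = (\<Sum>j\<in>A. P j * x j)"
    using assms(4) by (intro sum.cong) simp_all
  also have "(\<Sum>j\<in>B. M j * x j) = (\<Sum>j\<in>B. r * x j + Q j * x j)"
    using assms(5) by (intro sum.cong) (simp_all add: algebra_simps)
  finally show ?thesis
    by (simp add: sum.distrib sum_distrib_left)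
qed

lemma bridge_system_iff:
  fixes n1 n2 k1 k2 a b s c :: real
  defines "d \<equiv> 2 * k1 * n2 + 2 * k2 * n1 + k1 * k2"
  assumes d: "d \<noteq> 0"
  shows "a * k1 = 2 * s \<and> b * k2 = 2 * s \<and> a * n1 + b * n2 + s = c \<longleftrightarrow>
    a = 2 * c * k2 / d \<and> b = 2 * c * k1 / d \<and> s = c * k1 * k2 / d"
proof
  assume h: "a * k1 = 2 * s \<and> b * k2 = 2 * s \<and> a * n1 + b * n2 + s = c"
  have "a * d = 2 * c * k2" "b * d = 2 * c * k1" "s * d = c * k1 * k2"
    using h unfolding d_def by algebra+
  then show "a = 2 * c * k2 / d \<and> b = 2 * c * k1 / d \<and> s = c * k1 * k2 / d"
    using d by (simp add: field_simps)
next
  assume h: "a = 2 * c * k2 / d \<and> b = 2 * c * k1 / d \<and> s = c * k1 * k2 / d"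
  then have "a * n1 + b * n2 + s = c * d / d"
    by (simp add: d_def add_divide_distrib algebra_simps)
  with h show "a * k1 = 2 * s \<and> b * k2 = 2 * s \<and> a * n1 + b * n2 + s = c"
    using d by simp
qed

locale bridged_blocks =
  fixes V1 V2 :: "'a set" and D1 D2 :: "'a \<Rightarrow> 'a \<Rightarrow> real" and K1 K2 :: "'a \<Rightarrow> real"
    and u v :: 'a
  assumes finite: "finite V1" "finite V2" and disjoint: "V1 \<inter> V2 = {}"
    and u: "u \<in> V1" and v: "v \<in> V2" and D1_uu: "D1 u u = 0" and D2_vv: "D2 v v = 0"
    and invertible: "invertible_on V1 D1" "invertible_on V2 D2"
    and K1: "\<forall>i\<in>V1. mvec V1 D1 K1 i = card V1" and K2: "\<forall>i\<in>V2. mvec V2 D2 K2 i = card V2"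
begin

abbreviation "n1 \<equiv> real (card V1)"
abbreviation "n2 \<equiv> real (card V2)"
abbreviation "k1 \<equiv> sum K1 V1"
abbreviation "k2 \<equiv> sum K2 V2"

definition bridge_matrix :: "'a \<Rightarrow> 'a \<Rightarrow> real" where
  "bridge_matrix i j =
    (if i \<in> V1 then if j \<in> V1 then D1 i j else D1 i u + 1 + D2 v j
     else if j \<in> V1 then D2 i v + 1 + D1 u j else D2 i j)"

definition bridge_vector :: "real \<Rightarrow> real \<Rightarrow> real \<Rightarrow> 'a \<Rightarrow> real" where
  "bridge_vector a b s j =
    (if j \<in> V1 then a * K1 j - (if j = u then s else 0)
     else if j \<in> V2 then b * K2 j - (if j = v then s else 0) else 0)"

lemma n1_pos: "n1 > 0" and n2_pos: "n2 > 0"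
  using finite u v card_gt_0_iff by auto

lemma mvec_bridge_matrix_left:
  assumes "i \<in> V1"
  shows "mvec (V1 \<union> V2) bridge_matrix x i =
    mvec V1 D1 x i + (D1 i u + 1) * sum x V2 + mvec V2 D2 x v"
  unfolding mvec_def using assms disjoint
  by (intro sum_Un_bridge_row finite) (auto simp: bridge_matrix_def)

lemma mvec_bridge_matrix_right:
  assumes "i \<in> V2"
  shows "mvec (V1 \<union> V2) bridge_matrix x i =
    mvec V2 D2 x i + (D2 i v + 1) * sum x V1 + mvec V1 D1 x u"
  unfolding mvec_def Un_commute[of V1] using assms disjoint
  by (intro sum_Un_bridge_row finite) (auto simp: bridge_matrix_def)

lemma bridge_vector_left: "\<forall>j\<in>V1. bridge_vector a b s j = a * K1 j - (if j = u then s else 0)"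
  by (simp add: bridge_vector_def)

lemma bridge_vector_right: "\<forall>j\<in>V2. bridge_vector a b s j = b * K2 j - (if j = v then s else 0)"
  using disjoint by (auto simp: bridge_vector_def)

lemma sum_bridge_vector: "sum (bridge_vector a b s) (V1 \<union> V2) = a * k1 + b * k2 - 2 * s"
  using sum.union_disjoint[OF finite disjoint, of "bridge_vector a b s"]
    sum_shifted[OF finite(1) u bridge_vector_left] sum_shifted[OF finite(2) v bridge_vector_right]
  by simp

lemma bridge_vector_solves:
  assumes "a * k1 = 2 * s" "b * k2 = 2 * s" "a * n1 + b * n2 + s = c" "i \<in> V1 \<union> V2"
  shows "mvec (V1 \<union> V2) bridge_matrix (bridge_vector a b s) i = c"
proof -
  let ?x = "bridge_vector a b s"
  have sums: "sum ?x V1 = s" "sum ?x V2 = s"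
    using sum_shifted[OF finite(1) u bridge_vector_left]
      sum_shifted[OF finite(2) v bridge_vector_right] assms(1,2)
    by simp_all
  have mvec1: "mvec V1 D1 ?x j = a * n1 - D1 j u * s" if "j \<in> V1" for j
    using mvec_shifted[OF finite(1) u bridge_vector_left] K1 that by simp
  have mvec2: "mvec V2 D2 ?x j = b * n2 - D2 j v * s" if "j \<in> V2" for j
    using mvec_shifted[OF finite(2) v bridge_vector_right] K2 that by simp
  show ?thesis
  proof (cases "i \<in> V1")
    case True
    then show ?thesis
      using mvec_bridge_matrix_left[OF True] sums mvec1[OF True] mvec2[OF v] D2_vv assms(3)
      by (simp add: algebra_simps)
  next
    case False
    then have "i \<in> V2" using assms(4) by blast
    then show ?thesis
      using mvec_bridge_matrix_right[OF \<open>i \<in> V2\<close>] sums mvec2[OF \<open>i \<in> V2\<close>] mvec1[OF u]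
        D1_uu assms(3)
      by (simp add: algebra_simps)
  qed
qed

lemma bridge_solution_shape:
  assumes sol: "\<forall>i\<in>V1 \<union> V2. mvec (V1 \<union> V2) bridge_matrix x i = c"
  obtains a b s where "\<forall>j\<in>V1 \<union> V2. x j = bridge_vector a b s j"
    and "a * k1 = 2 * s" "b * k2 = 2 * s" "a * n1 + b * n2 + s = c"
proof -
  define s1 s2 where "s1 = sum x V1" and "s2 = sum x V2"
  define w1 w2 where "w1 = mvec V1 D1 x u" and "w2 = mvec V2 D2 x v"
  define a b where "a = (c - s2 - w2) / n1" and "b = (c - s1 - w1) / n2"
  have "\<forall>i\<in>V1. mvec V1 D1 x i + D1 i u * s2 = c - s2 - w2"
  proof
    fix i assume i: "i \<in> V1"
    with sol have "mvec (V1 \<union> V2) bridge_matrix x i = c" by blast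
    with mvec_bridge_matrix_left[OF i, of x]
    show "mvec V1 D1 x i + D1 i u * s2 = c - s2 - w2"
      by (simp add: s2_def w2_def ring_distribs)
  qed
  from invertible_on_shifted_solution[OF finite(1) invertible(1) K1 _ u this]
  have x1: "\<forall>j\<in>V1. x j = a * K1 j - (if j = u then s2 else 0)"
    using n1_pos by (simp add: a_def)
  have "\<forall>i\<in>V2. mvec V2 D2 x i + D2 i v * s1 = c - s1 - w1"
  proof
    fix i assume i: "i \<in> V2"
    with sol have "mvec (V1 \<union> V2) bridge_matrix x i = c" by blast
    with mvec_bridge_matrix_right[OF i, of x]
    show "mvec V2 D2 x i + D2 i v * s1 = c - s1 - w1"
      by (simp add: s1_def w1_def ring_distribs)
  qed
  from invertible_on_shifted_solution[OF finite(2) invertible(2) K2 _ v this]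
  have x2: "\<forall>j\<in>V2. x j = b * K2 j - (if j = v then s1 else 0)"
    using n2_pos by (simp add: b_def)
  have w: "w1 = a * n1" "w2 = b * n2"
    using mvec_shifted[OF finite(1) u x1] mvec_shifted[OF finite(2) v x2] K1 K2 u v D1_uu D2_vv
    by (simp_all add: w1_def w2_def)
  have an: "a * n1 = c - s2 - w2" and bn: "b * n2 = c - s1 - w1"
    using n1_pos n2_pos by (simp_all add: a_def b_def)
  have s: "s1 = a * k1 - s2" "s2 = b * k2 - s1"
    using sum_shifted[OF finite(1) u x1] sum_shifted[OF finite(2) v x2]
    by (simp_all add: s1_def s2_def)
  have "s1 = s2" using w an bn by linarith
  show thesis
  proof (rule that[of a b s1])
    show "\<forall>j\<in>V1 \<union> V2. x j = bridge_vector a b s1 j"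
      using x1 x2 \<open>s1 = s2\<close> disjoint by (auto simp: bridge_vector_def)
  qed (use w an s \<open>s1 = s2\<close> in linarith)+
qed

lemma bridge_solutions:
  defines "d \<equiv> 2 * k1 * n2 + 2 * k2 * n1 + k1 * k2"
  assumes d: "d \<noteq> 0"
  shows "{x. (\<forall>i. i \<notin> V1 \<union> V2 \<longrightarrow> x i = 0) \<and>
              (\<forall>i\<in>V1 \<union> V2. mvec (V1 \<union> V2) bridge_matrix x i = c)} =
         {bridge_vector (2 * c * k2 / d) (2 * c * k1 / d) (c * k1 * k2 / d)}"
    (is "?S = {bridge_vector ?a ?b ?s}")
proof -
  note system = bridge_system_iff[of k1 n2 k2 n1, folded d_def, OF d]
  have "?a * k1 = 2 * ?s \<and> ?b * k2 = 2 * ?s \<and> ?a * n1 + ?b * n2 + ?s = c"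
    by (rule system[THEN iffD2]) simp
  then have "bridge_vector ?a ?b ?s \<in> ?S"
    using bridge_vector_solves by (auto simp: bridge_vector_def)
  moreover have "x = bridge_vector ?a ?b ?s" if "x \<in> ?S" for x
  proof -
    from that have "\<forall>i\<in>V1 \<union> V2. mvec (V1 \<union> V2) bridge_matrix x i = c" by blast
    then obtain a b s where x: "\<forall>j\<in>V1 \<union> V2. x j = bridge_vector a b s j"
      and "a * k1 = 2 * s \<and> b * k2 = 2 * s \<and> a * n1 + b * n2 + s = c"
      by (rule bridge_solution_shape) blast
    then have "a = ?a \<and> b = ?b \<and> s = ?s" by (simp only: system)
    show "x = bridge_vector ?a ?b ?s"
    proof
      fix j show "x j = bridge_vector ?a ?b ?s j"
        using x that \<open>a = ?a \<and> b = ?b \<and> s = ?s\<close>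
        by (cases "j \<in> V1 \<union> V2") (auto simp: bridge_vector_def)
    qed
  qed
  ultimately show ?thesis by blast
qed

end

theorem mainTheorem6:
  fixes V1 V2 :: "'a set" and E1 E2 :: "'a \<Rightarrow> 'a \<Rightarrow> bool" and u v :: 'a
  assumes G1: "connected_graph V1 E1" and G2: "connected_graph V2 E2"
    and disj: "V1 \<inter> V2 = {}"
    and n1: "card V1 \<ge> 2" and n2: "card V2 \<ge> 2"
    and inv1: "invertible_on V1 (dist_matrix V1 E1)"
    and inv2: "invertible_on V2 (dist_matrix V2 E2)"
    and u: "u \<in> V1" and v: "v \<in> V2"
    and Z: "(2 + (\<Sum>w\<in>V1. steinerberger_curv V1 E1 w) / real (card V1)) *
            (2 + (\<Sum>w\<in>V2. steinerberger_curv V2 E2 w) / real (card V2)) \<noteq> 4"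
    and Ku: "steinerberger_curv V1 E1 u \<noteq> 0"
    and Kv: "steinerberger_curv V2 E2 v \<noteq> 0"
  shows
    "let n1 = real (card V1); n2 = real (card V2);
         k1 = (\<Sum>w\<in>V1. steinerberger_curv V1 E1 w);
         k2 = (\<Sum>w\<in>V2. steinerberger_curv V2 E2 w);
         Z = (2 + k1 / n1) * (2 + k2 / n2);
         \<alpha> = 2 * (n1 + n2) * k2 / (n1 * n2 * (Z - 4));
         \<beta> = 2 * (n1 + n2) * k1 / (n1 * n2 * (Z - 4));
         V = V1 \<union> V2;
         E = (\<lambda>x y. E1 x y \<or> E2 x y \<or> (x = u \<and> y = v) \<or> (x = v \<and> y = u));
         KV = (\<Sum>w\<in>V. steinerberger_curv V E w)
     in KV = \<alpha> / 2 * k1 + \<beta> / 2 * k2 \<and>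
        \<alpha> / 2 * k1 + \<beta> / 2 * k2 = \<alpha> * k1 \<and>
        \<alpha> * k1 = \<beta> * k2"
proof -
  have fin: "finite V1" "finite V2"
    using G1 G2 by (simp_all add: connected_graph_def simple_graph_def)
  interpret B: bridged_blocks V1 V2 "dist_matrix V1 E1" "dist_matrix V2 E2"
      "steinerberger_curv V1 E1" "steinerberger_curv V2 E2" u v
    by unfold_locales
      (simp_all add: fin disj u v inv1 inv2 graph_dist_self dist_matrix_def
        steinerberger_curv_invertible)
  define V E where "V = V1 \<union> V2" and "E = bridge_edges E1 E2 u v"
  define d where "d = 2 * B.k1 * B.n2 + 2 * B.k2 * B.n1 + B.k1 * B.k2"
  have d_eq: "B.n1 * B.n2 * ((2 + B.k1 / B.n1) * (2 + B.k2 / B.n2) - 4) = d"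
    using B.n1_pos B.n2_pos by (simp add: d_def field_simps)
  have "d \<noteq> 0" using Z B.n1_pos B.n2_pos by (simp flip: d_eq)
  have mvec_eq: "mvec V (dist_matrix V E) x i = mvec V B.bridge_matrix x i" if "i \<in> V" for x i
    unfolding mvec_def using that graph_dist_bridge[OF G1 G2 disj u v]
    by (intro sum.cong) (auto simp: V_def E_def dist_matrix_def B.bridge_matrix_def)
  define c where "c = B.n1 + B.n2"
  define \<alpha> \<beta> s where "\<alpha> = 2 * c * B.k2 / d" and "\<beta> = 2 * c * B.k1 / d"
    and "s = c * B.k1 * B.k2 / d"
  have "curv_solutions V E = {B.bridge_vector \<alpha> \<beta> s}"
    using B.bridge_solutions[OF \<open>d \<noteq> 0\<close>[unfolded d_def], of c] mvec_eq fin disj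
    by (simp add: curv_solutions_def V_def card_Un_disjoint d_def c_def
        \<alpha>_def \<beta>_def s_def)
  then have "(\<Sum>w\<in>V. steinerberger_curv V E w) = \<alpha> * B.k1 + \<beta> * B.k2 - 2 * s"
    using B.sum_bridge_vector by (simp add: steinerberger_curv_eqI V_def)
  moreover have "\<alpha> * B.k1 = 2 * s" "\<beta> * B.k2 = 2 * s"
    by (simp_all add: \<alpha>_def \<beta>_def s_def)
  moreover have "2 * (B.n1 + B.n2) * B.k2 / d = \<alpha>" "2 * (B.n1 + B.n2) * B.k1 / d = \<beta>"
    by (simp_all add: \<alpha>_def \<beta>_def c_def)
  moreover have "(\<lambda>x y. E1 x y \<or> E2 x y \<or> (x = u \<and> y = v) \<or> (x = v \<and> y = u)) = E"
    by (simp add: E_def fun_eq_iff bridge_edges_def)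
  ultimately show ?thesis
    unfolding Let_def d_eq V_def by simp
qed

end
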